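(* For every $\varepsilon>0$ and every $A\subseteq\mathbb R$ containing a nonempty open interval, $\mathfrak{ss}_e^\varepsilon=\mathfrak{ss}_l^A=\mathfrak{ss}_c$.
   Context: Let $\mathfrak S_{cc}$ be the set of all sequences $\mathbf a=\langle a_i:i\in\omega\rangle$ of rational numbers with $a_i\to0$ such that $\sum_i a_i$ is conditionally convergent (converges to a real number, with the positive terms summing to $+\infty$ and the negative terms to $-\infty$). Let $[\omega]^\omega_\omega$ be the set of infinite coinfinite subsets of $\omega$; for such $X$ with increasing enumeration $\langle i_n\rangle$, $\sum_X\mathbf a$ denotes $\sum_n a_{i_n}$. $\mathfrak{ss}_c$ is the least cardinality of $\mathcal X\subseteq[\omega]^\omega_\omega$ such that every $\mathbf a\in\mathfrak S_{cc}$ has some $X\in\mathcal X$ with $\sum_X\mathbf a$ convergent (to a real number). For $A\subseteq\mathbb R$, $\mathfrak{ss}_l^A$ is the least cardinality of $\mathcal X\subseteq[\omega]^\omega_\omega$ such that every $\mathbf a\in\mathfrak S_{cc}$ has some $X\in\mathcal X$ for which $\sum_X\mathbf a$ converges to a limit in $A$. For $\varepsilon>0$, $\mathfrak{ss}_e^\varepsilon$ is the least cardinality of $\mathcal X\subseteq[\omega]^\omega_\omega$ such that every $\mathbf a\in\mathfrak S_{cc}$ has some $X\in\mathcal X$ for which $\sum_X\mathbf a$ converges to a limit in $(\sum\mathbf a-\varepsilon,\sum\mathbf a+\varepsilon)$. *)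

theory Defs
  imports Complex_Main "HOL-Library.Infinite_Set"
begin

definition S_cc :: "(nat \<Rightarrow> real) set" where
  "S_cc = {a. (\<forall>i. a i \<in> \<rat>) \<and> a \<longlonglongrightarrow> 0 \<and> summable a \<and>
      filterlim (\<lambda>n. \<Sum>i<n. max (a i) 0) at_top sequentially \<and>
      filterlim (\<lambda>n. \<Sum>i<n. min (a i) 0) at_bot sequentially}"

definition inf_coinf :: "nat set set" where
  "inf_coinf = {X. infinite X \<and> infinite (UNIV - X)}"

definition subser :: "(nat \<Rightarrow> real) \<Rightarrow> nat set \<Rightarrow> nat \<Rightarrow> real" where
  "subser a X = (\<lambda>n. a (Infinite_Set.enumerate X n))"

definition ss_c_family :: "nat set set \<Rightarrow> bool" where
  "ss_c_family \<X> \<longleftrightarrow> \<X> \<subseteq> inf_coinf \<and>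
     (\<forall>a\<in>S_cc. \<exists>X\<in>\<X>. summable (subser a X))"

definition ss_l_family :: "real set \<Rightarrow> nat set set \<Rightarrow> bool" where
  "ss_l_family A \<X> \<longleftrightarrow> \<X> \<subseteq> inf_coinf \<and>
     (\<forall>a\<in>S_cc. \<exists>X\<in>\<X>. \<exists>L\<in>A. subser a X sums L)"

definition ss_e_family :: "real \<Rightarrow> nat set set \<Rightarrow> bool" where
  "ss_e_family \<epsilon> \<X> \<longleftrightarrow> \<X> \<subseteq> inf_coinf \<and>
     (\<forall>a\<in>S_cc. \<exists>X\<in>\<X>. \<exists>L. subser a X sums L \<and>
        L \<in> {suminf a - \<epsilon> <..< suminf a + \<epsilon>})"

text \<open>The least cardinality of a family satisfying P, as a cardinal (a well-order,
  compared up to isomorphism ordIso, as usual for HOL cardinals).\<close>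
definition mincard :: "(nat set set \<Rightarrow> bool) \<Rightarrow> nat set rel" where
  "mincard P = card_of (SOME \<X>. P \<X> \<and> (\<forall>\<Y>. P \<Y> \<longrightarrow> (card_of \<X>, card_of \<Y>) \<in> ordLeq))"

end

(*
  If the subseries of a along X converges, toggling the membership in X of the indices in a
  finite set F changes its sum by the sum over F of b, where b is a with the signs flipped on X.
  Like a, the sequence b tends to 0 and has divergent positive and negative parts, so a greedy
  choice of F moves the sum within any distance of any target. Hence the finite variants of a
  family witnessing ss_c witness ss_l^A, and their complements witness ss_e^eps, since the
  subseries along the complement sums to the full sum minus the subseries sum.

  There are only |X| finite variants of a family X because such a family is infinite, indeed
  uncountable: for countably many infinite coinfinite sets E_j, put pairs c, -c at positions
  i, i + 1 with i in E_j and i + 1 not in E_j, with weights 1/(n+1) on consecutive blocks of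
  n + 1 pairs, infinitely many blocks serving each E_j. Every block serving E_j adds exactly 1
  to the subseries along E_j, which therefore is not Cauchy. The reverse inequalities hold
  because every family witnessing ss_e^eps or ss_l^A witnesses ss_c.
*)
theory Submission
  imports Defs "HOL-Library.Countable_Set_Type"
begin

unbundle cardinal_syntax

section \<open>Subseries and spaced index sequences\<close>

definition restrict_seq :: "(nat \<Rightarrow> real) \<Rightarrow> nat set \<Rightarrow> nat \<Rightarrow> real" where
  "restrict_seq a X = (\<lambda>i. if i \<in> X then a i else 0)"

lemma subser_sums_iff:
  assumes "infinite X"
  shows "subser a X sums L \<longleftrightarrow> restrict_seq a X sums L"
proof -
  have "(\<lambda>n. restrict_seq a X (enumerate X n)) sums L \<longleftrightarrow> restrict_seq a X sums L"
    by (rule sums_mono_reindex) (auto simp: strict_mono_enumerate range_enumerate assms restrict_seq_def)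
  moreover have "(\<lambda>n. restrict_seq a X (enumerate X n)) = subser a X"
    using enumerate_in_set[OF assms] by (auto simp: restrict_seq_def subser_def)
  ultimately show ?thesis by simp
qed

lemma subser_summable_iff:
  assumes "infinite X"
  shows "summable (subser a X) \<longleftrightarrow> summable (restrict_seq a X)"
  using subser_sums_iff[OF assms] by (auto simp: summable_def)

definition spaced :: "(nat \<Rightarrow> nat) \<Rightarrow> bool" where
  "spaced x \<longleftrightarrow> (\<forall>k. Suc (x k) < x (Suc k))"

lemma spaced_strict_mono: "spaced x \<Longrightarrow> strict_mono x"
  unfolding strict_mono_Suc_iff spaced_def using Suc_lessD by blast

lemma spaced_Suc_neq:
  assumes "spaced x"
  shows "Suc (x k) \<noteq> x l"
proof
  assume eq: "Suc (x k) = x l"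
  have "x k < x l" using eq by simp
  moreover have "x l < x (Suc k)" using eq assms unfolding spaced_def by metis
  ultimately show False
    using spaced_strict_mono[OF assms] by (simp add: strict_mono_less)
qed

lemma spaced_between:
  assumes "spaced x" "x m < i" "i < x (Suc m)"
  shows "i \<notin> range x"
  using assms spaced_strict_mono[OF assms(1)] by (auto simp: strict_mono_less)

lemma exists_spaced:
  assumes "\<And>k p. \<exists>i\<ge>p. Q k i"
  shows "\<exists>x. spaced x \<and> (\<forall>k. Q k (x k))"
proof -
  have "\<exists>x. \<forall>k. Q k (x k) \<and> Suc (x k) < x (Suc k)"
  proof (rule dependent_nat_choice)
    show "\<exists>i. Q 0 i" using assms by blast
    show "\<exists>j. Q (Suc k) j \<and> Suc i < j" for i k
      using assms[where k="Suc k" and p="Suc (Suc i)"] by auto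
  qed
  then show ?thesis unfolding spaced_def by blast
qed

lemma spaced_range_inf_coinf:
  assumes "spaced x"
  shows "range x \<in> inf_coinf"
proof -
  have "inj x" "inj (\<lambda>k. Suc (x k))"
    using strict_mono_imp_inj_on[OF spaced_strict_mono[OF assms]] by (auto simp: inj_def)
  moreover have "range (\<lambda>k. Suc (x k)) \<subseteq> UNIV - range x"
    using spaced_Suc_neq[OF assms] by auto
  ultimately show ?thesis
    unfolding inf_coinf_def by (metis range_inj_infinite infinite_super mem_Collect_eq)
qed

lemma sym_diff_finite_inf_coinf:
  assumes "X \<in> inf_coinf" "finite F"
  shows "sym_diff X F \<in> inf_coinf"
proof -
  have "infinite (X - F)" "infinite ((UNIV - X) - F)"
    using assms by (auto simp: inf_coinf_def)
  moreover have "X - F \<subseteq> sym_diff X F" "(UNIV - X) - F \<subseteq> UNIV - sym_diff X F"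
    by blast+
  ultimately show ?thesis
    unfolding inf_coinf_def using infinite_super by blast
qed

lemma Compl_inf_coinf: "X \<in> inf_coinf \<Longrightarrow> - X \<in> inf_coinf"
  by (auto simp: inf_coinf_def Compl_eq_Diff_UNIV Diff_Diff_Int)

lemma inf_coinf_boundary:
  assumes "X \<in> inf_coinf"
  shows "\<exists>i\<ge>p. i \<in> X \<and> Suc i \<notin> X"
proof -
  have "\<forall>m. \<exists>n\<ge>m. n \<in> X" "\<forall>m. \<exists>n>m. n \<in> UNIV - X"
    using assms infinite_nat_iff_unbounded_le infinite_nat_iff_unbounded
    unfolding inf_coinf_def by blast+
  then obtain j m where j: "j \<in> X" "p \<le> j" and m: "m \<notin> X" "j < m"
    by blast
  have "\<exists>i\<ge>j. i \<in> X \<and> Suc i \<notin> X" if "j \<in> X" "n \<notin> X" "j < n" for n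
    using that
  proof (induction n)
    case (Suc n)
    then show ?case by (cases "n \<in> X") (auto simp: less_Suc_eq intro: less_imp_le)
  qed simp
  then show ?thesis using j m by (meson order_trans)
qed

lemma ss_c_family_inf_coinf: "ss_c_family inf_coinf"
  unfolding ss_c_family_def
proof (intro conjI ballI)
  fix a assume "a \<in> S_cc"
  then have "a \<longlonglongrightarrow> 0" by (simp add: S_cc_def)
  have "\<exists>i\<ge>p. \<bar>a i\<bar> < (1/2) ^ k" for k p
  proof -
    obtain N where "\<forall>n\<ge>N. norm (a n - 0) < (1/2) ^ k"
      using LIMSEQ_D[OF \<open>a \<longlonglongrightarrow> 0\<close>, of "(1/2) ^ k"] by auto
    then show ?thesis by (intro exI[of _ "max p N"]) auto
  qed
  then obtain x where x: "spaced x" "\<And>k. \<bar>a (x k)\<bar> < (1/2) ^ k"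
    using exists_spaced[of "\<lambda>k i. \<bar>a i\<bar> < (1/2) ^ k"] by blast
  have "summable (\<lambda>k. a (x k))"
    by (rule summable_comparison_test[of _ "\<lambda>k. (1/2) ^ k"])
      (use x(2) less_imp_le in auto)
  moreover have "summable (\<lambda>k. restrict_seq a (range x) (x k)) = summable (restrict_seq a (range x))"
    by (rule summable_mono_reindex[OF spaced_strict_mono[OF x(1)]]) (simp add: restrict_seq_def)
  ultimately have "summable (restrict_seq a (range x))" by (simp add: restrict_seq_def)
  moreover have "range x \<in> inf_coinf" by (rule spaced_range_inf_coinf[OF x(1)])
  ultimately show "\<exists>X\<in>inf_coinf. summable (subser a X)"
    using subser_summable_iff by (auto simp: inf_coinf_def)
qed simp

section \<open>A series with no convergent subseries along countably many given sets\<close>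

definition spread :: "(nat \<Rightarrow> nat) \<Rightarrow> (nat \<Rightarrow> real) \<Rightarrow> nat \<Rightarrow> real" where
  "spread x c i = (if i \<in> range x then c (inv x i) else 0)"

text \<open>For spaced \<open>x\<close>, \<open>dipoles x c\<close> has \<open>c k\<close> at \<open>x k\<close>, \<open>- c k\<close> at \<open>x k + 1\<close> and
  \<open>0\<close> elsewhere; writing it as a difference of shifts makes its partial sums telescope.\<close>

definition dipoles :: "(nat \<Rightarrow> nat) \<Rightarrow> (nat \<Rightarrow> real) \<Rightarrow> nat \<Rightarrow> real" where
  "dipoles x c i = spread x c i - (if i = 0 then 0 else spread x c (i - 1))"

lemma spread_at: "inj x \<Longrightarrow> spread x c (x k) = c k"
  by (simp add: spread_def)

lemma spread_tendsto_zero: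
  assumes "strict_mono x" "c \<longlonglongrightarrow> 0"
  shows "spread x c \<longlonglongrightarrow> 0"
proof (rule LIMSEQ_I)
  fix r :: real assume "0 < r"
  then obtain K where K: "\<forall>k\<ge>K. norm (c k) < r"
    using LIMSEQ_D[OF assms(2)] by auto
  have "norm (spread x c i) < r" if "x K \<le> i" for i
  proof (cases "i \<in> range x")
    case True
    then obtain k where "i = x k" by auto
    then show ?thesis
      using K that assms(1) by (simp add: spread_at strict_mono_imp_inj_on strict_mono_less_eq)
  qed (simp add: spread_def \<open>0 < r\<close>)
  then show "\<exists>N. \<forall>i\<ge>N. norm (spread x c i - 0) < r" by auto
qed

context
  fixes x :: "nat \<Rightarrow> nat"
  assumes x: "spaced x"
begin

lemma dipoles_at: "dipoles x c (x k) = c k"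
proof -
  have "inj x" using strict_mono_imp_inj_on[OF spaced_strict_mono[OF x]] .
  moreover have "x k - 1 \<notin> range x" if "x k \<noteq> 0"
    using that spaced_Suc_neq[OF x] by (metis Suc_pred' gr0I rangeE)
  ultimately show ?thesis by (auto simp: dipoles_def spread_at spread_def)
qed

lemma dipoles_vanish:
  assumes "\<And>k. i \<noteq> x k \<and> i \<noteq> Suc (x k)"
  shows "dipoles x c i = 0"
proof -
  have "i \<notin> range x" using assms by auto
  moreover have "i - 1 \<notin> range x" if "i \<noteq> 0"
    using assms that by (metis Suc_pred' neq0_conv rangeE)
  ultimately show ?thesis by (simp add: dipoles_def spread_def)
qed

lemma dipoles_sums_zero:
  assumes "c \<longlonglongrightarrow> 0"
  shows "dipoles x c sums 0"
proof -
  define d where "d n = (if n = 0 then 0 else spread x c (n - 1))" for n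
  have "(\<lambda>n. d (Suc n)) \<longlonglongrightarrow> 0"
    using spread_tendsto_zero[OF spaced_strict_mono[OF x] assms] by (simp add: d_def)
  then have "d \<longlonglongrightarrow> 0" by (rule LIMSEQ_imp_Suc)
  moreover have "dipoles x c = (\<lambda>n. d (Suc n) - d n)"
    by (auto simp: dipoles_def d_def)
  ultimately show ?thesis using telescope_sums[of d 0] by (simp add: d_def)
qed

lemma sum_spaced_interval:
  fixes h :: "nat \<Rightarrow> real"
  assumes h: "\<And>i. (\<And>k. i \<noteq> x k \<and> i \<noteq> Suc (x k)) \<Longrightarrow> h i = 0" and "m \<le> n"
  shows "(\<Sum>i\<in>{x m..<x n}. h i) = (\<Sum>k\<in>{m..<n}. h (x k) + h (Suc (x k)))"
  using \<open>m \<le> n\<close>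
proof (induction n rule: dec_induct)
  case (step n)
  have sm: "strict_mono x" by (rule spaced_strict_mono[OF x])
  have gap: "(\<Sum>i\<in>{Suc (Suc (x n))..<x (Suc n)}. h i) = 0"
  proof (rule sum.neutral, intro ballI h)
    fix i k assume i: "i \<in> {Suc (Suc (x n))..<x (Suc n)}"
    show "i \<noteq> x k \<and> i \<noteq> Suc (x k)"
      using spaced_between[OF x, of n i] spaced_between[OF x, of n "i - 1"] i by auto
  qed
  have "Suc (x n) < x (Suc n)" using x by (simp add: spaced_def)
  then have "(\<Sum>i\<in>{x n..<x (Suc n)}. h i) = h (x n) + h (Suc (x n))"
    by (simp add: sum.atLeast_Suc_lessThan gap)
  moreover have "x m \<le> x n" "x n \<le> x (Suc n)"
    using step.hyps sm by (simp_all add: strict_mono_less_eq)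
  ultimately show ?case
    using step.IH sum.atLeastLessThan_concat[of "x m" "x n" "x (Suc n)" h] step.hyps
    by (simp add: sum.atLeastLessThan_Suc)
qed simp

lemma dipoles_in_S_cc:
  assumes nonneg: "\<And>k. c k \<ge> 0" and lim: "c \<longlonglongrightarrow> 0"
    and div: "filterlim (\<lambda>K. \<Sum>k<K. c k) at_top sequentially"
    and rat: "\<And>k. c k \<in> \<rat>"
  shows "dipoles x c \<in> S_cc"
proof -
  define a where "a = dipoles x c"
  have sm: "strict_mono x" by (rule spaced_strict_mono[OF x])
  have "a sums 0" unfolding a_def by (rule dipoles_sums_zero[OF lim])
  then have partial: "(\<lambda>n. \<Sum>i<n. a i) \<longlonglongrightarrow> 0" and "summable a"
    by (auto simp: sums_def sums_summable)
  have "a i \<in> \<rat>" for i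
    using rat by (simp add: a_def dipoles_def spread_def)
  have pos_ge: "(\<Sum>k<K. c k) \<le> (\<Sum>i<n. max (a i) 0)" if "x K \<le> n" for K n
  proof -
    have "(\<Sum>k<K. c k) = (\<Sum>i\<in>x ` {..<K}. max (a i) 0)"
      using nonneg strict_mono_imp_inj_on[OF sm]
      by (simp add: sum.reindex inj_on_subset[of x UNIV] a_def dipoles_at)
    also have "\<dots> \<le> (\<Sum>i<n. max (a i) 0)"
      using that by (intro sum_mono2) (auto intro: less_le_trans[OF strict_monoD[OF sm]])
    finally show ?thesis .
  qed
  have pos: "filterlim (\<lambda>n. \<Sum>i<n. max (a i) 0) at_top sequentially"
    unfolding filterlim_at_top
  proof
    fix Z :: real
    obtain K where "Z \<le> (\<Sum>k<K. c k)"
      using div by (auto simp: filterlim_at_top eventually_sequentially)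
    then show "eventually (\<lambda>n. Z \<le> (\<Sum>i<n. max (a i) 0)) sequentially"
      using pos_ge order_trans unfolding eventually_sequentially by blast
  qed
  have "min (a i) 0 = a i + - max (a i) 0" for i by simp
  then have split: "(\<lambda>n. \<Sum>i<n. min (a i) 0) = (\<lambda>n. (\<Sum>i<n. a i) + - (\<Sum>i<n. max (a i) 0))"
    by (simp only: sum.distrib sum_negf)
  have "filterlim (\<lambda>n. - (\<Sum>i<n. max (a i) 0)) at_bot sequentially"
    using pos by (simp add: filterlim_uminus_at_top)
  then have neg: "filterlim (\<lambda>n. \<Sum>i<n. min (a i) 0) at_bot sequentially"
    unfolding split by (rule filterlim_tendsto_add_at_bot_iff[OF partial, THEN iffD2])
  show ?thesis
    using \<open>\<And>i. a i \<in> \<rat>\<close> summable_LIMSEQ_zero[OF \<open>summable a\<close>] \<open>summable a\<close> pos neg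
    unfolding S_cc_def a_def by auto
qed

end

text \<open>\<open>prod_decode\<close> maps the block \<open>{triangle n..<triangle (Suc n)}\<close> onto the pairs
  \<open>(m, n - m)\<close>, so \<open>block_index k\<close> is the block containing \<open>k\<close>; each of the \<open>n + 1\<close>
  indices of block \<open>n\<close> gets weight \<open>1 / (n + 1)\<close>.\<close>

definition block_index :: "nat \<Rightarrow> nat" where
  "block_index k = fst (prod_decode k) + snd (prod_decode k)"

definition block_weight :: "nat \<Rightarrow> real" where
  "block_weight k = 1 / real (Suc (block_index k))"

lemma block_index_eq:
  assumes "k \<in> {triangle n..<triangle (Suc n)}"
  shows "block_index k = n"
proof -
  obtain m where "k = triangle n + m" "m \<le> n"
    using assms by (metis atLeastLessThan_iff le_add_diff_inverse less_Suc_eq_le nat_add_left_cancel_less triangle_Suc)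
  then show ?thesis
    by (simp add: block_index_def prod_decode_triangle_add prod_decode_aux.simps)
qed

lemma block_index_ge:
  assumes "triangle n \<le> k"
  shows "n \<le> block_index k"
proof (rule ccontr)
  define s where "s = block_index k"
  assume "\<not> n \<le> block_index k"
  then have "Suc s \<le> n" by (simp add: s_def)
  moreover have "mono triangle" by (rule incseq_SucI) simp
  ultimately have "triangle (Suc s) \<le> triangle n" by (simp only: monoD)
  moreover have "k = triangle s + fst (prod_decode k)"
    using prod_decode_inverse[of k] by (simp add: s_def block_index_def prod_encode_def split_def)
  ultimately show False
    using assms by (simp add: s_def block_index_def)
qed

lemma sum_block_weight_block: "(\<Sum>k\<in>{triangle n..<triangle (Suc n)}. block_weight k) = 1"
  by (simp add: block_weight_def block_index_eq)

lemma sum_block_weight_triangle: "(\<Sum>k<triangle n. block_weight k) = n"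
proof (induction n)
  case (Suc n)
  have "triangle n \<le> triangle (Suc n)" by simp
  from sum.atLeastLessThan_concat[OF le0 this, of block_weight]
  show ?case using Suc sum_block_weight_block[of n] by (simp add: lessThan_atLeast0)
qed simp

lemma block_weight_tendsto_zero: "block_weight \<longlonglongrightarrow> 0"
proof (rule LIMSEQ_I)
  fix r :: real assume "0 < r"
  then obtain n :: nat where n: "1 / r < n"
    using reals_Archimedean2 by blast
  then have "1 < r * n" using \<open>0 < r\<close> by (simp add: field_simps)
  have "norm (block_weight k) < r" if "triangle n \<le> k" for k
  proof -
    have "r * n \<le> r * block_index k"
      using block_index_ge[OF that] \<open>0 < r\<close> by simp
    then have "1 < r + r * block_index k"
      using \<open>1 < r * n\<close> \<open>0 < r\<close> by linarith
    then show ?thesis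
      using \<open>0 < r\<close> by (simp add: block_weight_def field_simps)
  qed
  then show "\<exists>N. \<forall>k\<ge>N. norm (block_weight k - 0) < r" by auto
qed

lemma block_weight_divergent: "filterlim (\<lambda>K. \<Sum>k<K. block_weight k) at_top sequentially"
  unfolding filterlim_at_top eventually_sequentially
proof
  fix Z :: real
  obtain n :: nat where "Z < n" using reals_Archimedean2 by blast
  moreover have "(\<Sum>k<triangle n. block_weight k) \<le> (\<Sum>k<K. block_weight k)" if "triangle n \<le> K" for K
    using that by (intro sum_mono2) (auto simp: block_weight_def)
  ultimately show "\<exists>N. \<forall>K\<ge>N. Z \<le> (\<Sum>k<K. block_weight k)"
    using sum_block_weight_triangle by (metis less_imp_le order_trans)
qed

lemma exists_S_cc_not_summable_on:
  fixes E :: "nat \<Rightarrow> nat set"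
  assumes E: "\<And>j. E j \<in> inf_coinf"
  shows "\<exists>a\<in>S_cc. \<forall>j. \<not> summable (restrict_seq a (E j))"
proof -
  \<comment> \<open>Block \<open>n\<close> serves \<open>E (fst (prod_decode n))\<close>, so every \<open>E j\<close> is served by
    infinitely many blocks, and each of them adds exactly 1 to the subseries along \<open>E j\<close>.\<close>
  define T where "T k = E (fst (prod_decode (block_index k)))" for k
  have "\<exists>i\<ge>p. i \<in> T k \<and> Suc i \<notin> T k" for k p
    unfolding T_def by (rule inf_coinf_boundary[OF E])
  then obtain x where x: "spaced x" "\<And>k. x k \<in> T k \<and> Suc (x k) \<notin> T k"
    using exists_spaced[of "\<lambda>k i. i \<in> T k \<and> Suc i \<notin> T k"] by blast
  define a where "a = dipoles x block_weight"
  have "a \<in> S_cc"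
    unfolding a_def
    by (rule dipoles_in_S_cc[OF x(1) _ block_weight_tendsto_zero block_weight_divergent])
      (simp_all add: block_weight_def)
  moreover have "\<not> summable (restrict_seq a (E j))" for j
  proof
    assume "summable (restrict_seq a (E j))"
    then obtain N where N: "\<forall>m\<ge>N. \<forall>n. norm (sum (restrict_seq a (E j)) {m..<n}) < 1"
      unfolding summable_Cauchy by (meson zero_less_one)
    define p where "p = prod_encode (j, N)"
    have "N \<le> p" by (simp add: p_def le_prod_encode_2)
    also have "p \<le> triangle p" by (induction p) auto
    also have "triangle p \<le> x (triangle p)"
      by (rule strict_mono_imp_increasing[OF spaced_strict_mono[OF x(1)]])
    finally have "N \<le> x (triangle p)" .
    have "sum (restrict_seq a (E j)) {x (triangle p)..<x (triangle (Suc p))}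
        = (\<Sum>k\<in>{triangle p..<triangle (Suc p)}. restrict_seq a (E j) (x k) + restrict_seq a (E j) (Suc (x k)))"
      by (rule sum_spaced_interval[OF x(1)]) (auto simp: restrict_seq_def a_def dipoles_vanish[OF x(1)])
    also have "\<dots> = (\<Sum>k\<in>{triangle p..<triangle (Suc p)}. block_weight k)"
    proof (rule sum.cong[OF refl])
      fix k assume "k \<in> {triangle p..<triangle (Suc p)}"
      then have "T k = E j" by (simp add: T_def block_index_eq p_def)
      then show "restrict_seq a (E j) (x k) + restrict_seq a (E j) (Suc (x k)) = block_weight k"
        using x(2)[of k] by (simp add: restrict_seq_def a_def dipoles_at[OF x(1)])
    qed
    also have "\<dots> = 1" by (rule sum_block_weight_block)
    finally show False
      using N \<open>N \<le> x (triangle p)\<close> by (metis norm_one order_less_irrefl)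
  qed
  ultimately show ?thesis by blast
qed

lemma ss_c_family_uncountable:
  assumes "ss_c_family \<X>"
  shows "uncountable \<X>"
proof
  assume "countable \<X>"
  \<comment> \<open>The even numbers only make the family nonempty, as \<open>from_nat_into\<close> requires.\<close>
  define \<Y> where "\<Y> = insert (range (\<lambda>n. 2 * n)) \<X>"
  have "spaced (\<lambda>n. 2 * n)" by (simp add: spaced_def)
  then have "\<Y> \<subseteq> inf_coinf"
    using assms spaced_range_inf_coinf by (auto simp: \<Y>_def ss_c_family_def)
  moreover have "countable \<Y>" using \<open>countable \<X>\<close> by (simp add: \<Y>_def)
  moreover have "\<Y> \<noteq> {}" by (simp add: \<Y>_def)
  ultimately have "from_nat_into \<Y> j \<in> inf_coinf" for j
    using from_nat_into[of \<Y> j] by (meson subsetD)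
  then obtain a where a: "a \<in> S_cc" "\<forall>j. \<not> summable (restrict_seq a (from_nat_into \<Y> j))"
    using exists_S_cc_not_summable_on by blast
  obtain X where X: "X \<in> \<X>" "summable (subser a X)"
    using assms a(1) by (auto simp: ss_c_family_def)
  moreover have "infinite X"
    using assms X(1) by (auto simp: ss_c_family_def inf_coinf_def)
  ultimately have "summable (restrict_seq a X)"
    using subser_summable_iff by blast
  moreover obtain j where "from_nat_into \<Y> j = X"
    using from_nat_into_surj[OF \<open>countable \<Y>\<close>] X(1) by (auto simp: \<Y>_def)
  ultimately show False using a(2) by blast
qed

lemma ss_c_family_infinite: "ss_c_family \<X> \<Longrightarrow> infinite \<X>"
  using ss_c_family_uncountable countable_finite by blast

section \<open>Moving a subseries sum by finitely many changes\<close>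

lemma exists_crossing:
  fixes S :: "nat \<Rightarrow> 'a::linorder"
  assumes "m \<le> n" "S m < t" "t \<le> S n"
  shows "\<exists>k. m \<le> k \<and> k < n \<and> S k < t \<and> t \<le> S (Suc k)"
  using assms
proof (induction n rule: dec_induct)
  case (step n)
  show ?case
  proof (cases "S n < t")
    case True
    then show ?thesis using step.prems step.hyps by (intro exI[of _ n]) auto
  next
    case False
    then obtain k where "m \<le> k" "k < n" "S k < t" "t \<le> S (Suc k)"
      using step.IH step.prems(1) by (meson not_less)
    then show ?thesis by (intro exI[of _ k]) auto
  qed
qed simp

lemma finite_subsum_above:
  fixes b :: "nat \<Rightarrow> real"
  assumes lim: "b \<longlonglongrightarrow> 0" and pos: "filterlim (\<lambda>n. \<Sum>i<n. max (b i) 0) at_top sequentially"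
    and "0 < t" "0 < \<delta>"
  shows "\<exists>F. finite F \<and> t \<le> sum b F \<and> sum b F < t + \<delta>"
proof -
  obtain N where N: "\<forall>i\<ge>N. norm (b i - 0) < \<delta>"
    using LIMSEQ_D[OF lim \<open>0 < \<delta>\<close>] by blast
  define S where "S n = (\<Sum>i\<in>{N..<n}. max (b i) 0)" for n
  have "S n = (\<Sum>i<n. max (b i) 0) - (\<Sum>i<N. max (b i) 0)" if "N \<le> n" for n
    using sum.atLeastLessThan_concat[OF le0 that, of "\<lambda>i. max (b i) 0"]
    by (simp add: S_def atLeast0LessThan)
  moreover obtain M where M: "\<forall>n\<ge>M. t + (\<Sum>i<N. max (b i) 0) \<le> (\<Sum>i<n. max (b i) 0)"
    using pos unfolding filterlim_at_top eventually_sequentially by blast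
  ultimately have "N \<le> max N M" "t \<le> S (max N M)"
    using M[rule_format, of "max N M"] by (simp_all add: le_diff_eq)
  moreover have "S N < t" using \<open>0 < t\<close> by (simp add: S_def)
  ultimately obtain k where k: "N \<le> k" "S k < t" "t \<le> S (Suc k)"
    using exists_crossing[of N "max N M" S t] by blast
  have "max (b k) 0 < \<delta>"
    using N[rule_format, OF k(1)] \<open>0 < \<delta>\<close> by simp
  moreover have "S (Suc k) = S k + max (b k) 0"
    using k(1) by (simp add: S_def)
  ultimately have "S (Suc k) < t + \<delta>"
    using k(2) by linarith
  define F where "F = {i\<in>{N..<Suc k}. 0 < b i}"
  have "sum b F = (\<Sum>i\<in>{N..<Suc k}. if 0 < b i then b i else 0)"
    unfolding F_def by (rule sum.inter_filter) simp
  also have "\<dots> = S (Suc k)"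
    unfolding S_def by (rule sum.cong) auto
  finally have "sum b F = S (Suc k)" .
  moreover have "finite F" by (simp add: F_def)
  ultimately show ?thesis
    using k(3) \<open>S (Suc k) < t + \<delta>\<close> by (intro exI[of _ F] conjI) simp_all
qed

lemma finite_subsum_approx:
  fixes b :: "nat \<Rightarrow> real"
  assumes lim: "b \<longlonglongrightarrow> 0"
    and pos: "filterlim (\<lambda>n. \<Sum>i<n. max (b i) 0) at_top sequentially"
    and neg: "filterlim (\<lambda>n. \<Sum>i<n. min (b i) 0) at_bot sequentially"
    and "0 < \<delta>"
  shows "\<exists>F. finite F \<and> \<bar>sum b F - t\<bar> < \<delta>"
proof -
  consider "0 < t" | "t = 0" | "t < 0" by linarith
  then show ?thesis
  proof cases
    case 1
    then obtain F where "finite F" "t \<le> sum b F" "sum b F < t + \<delta>"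
      using finite_subsum_above[OF lim pos 1 \<open>0 < \<delta>\<close>] by blast
    then show ?thesis by (intro exI[of _ F]) simp
  next
    case 2
    then show ?thesis using \<open>0 < \<delta>\<close> by (intro exI[of _ "{}"]) simp
  next
    case 3
    have "max (- b i) 0 = - min (b i) 0" for i by linarith
    then have "(\<lambda>n. \<Sum>i<n. max (- b i) 0) = (\<lambda>n. - (\<Sum>i<n. min (b i) 0))"
      by (simp only: sum_negf)
    then have "filterlim (\<lambda>n. \<Sum>i<n. max (- b i) 0) at_top sequentially"
      using neg by (simp add: filterlim_uminus_at_bot)
    moreover have "(\<lambda>i. - b i) \<longlonglongrightarrow> 0"
      using tendsto_minus[OF lim] by simp
    ultimately obtain F where "finite F" "- t \<le> sum (\<lambda>i. - b i) F" "sum (\<lambda>i. - b i) F < - t + \<delta>"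
      using finite_subsum_above[of "\<lambda>i. - b i" "- t" \<delta>] 3 \<open>0 < \<delta>\<close> by auto
    then show ?thesis by (intro exI[of _ F]) (simp add: sum_negf)
  qed
qed

lemma finite_variant_sums_near:
  assumes a: "a \<in> S_cc" and X: "restrict_seq a X sums c" and "0 < \<delta>"
  shows "\<exists>F L. finite F \<and> restrict_seq a (sym_diff X F) sums L \<and> \<bar>L - t\<bar> < \<delta>"
proof -
  have lim: "a \<longlonglongrightarrow> 0"
    and pos: "filterlim (\<lambda>n. \<Sum>i<n. max (a i) 0) at_top sequentially"
    and neg: "filterlim (\<lambda>n. \<Sum>i<n. min (a i) 0) at_bot sequentially"
    using a by (auto simp: S_cc_def)
  \<comment> \<open>Toggling the membership of \<open>i\<close> in \<open>X\<close> changes the subseries by \<open>b i\<close>.\<close>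
  define b where "b i = (if i \<in> X then - a i else a i)" for i
  have partial: "(\<lambda>n. - (\<Sum>i<n. restrict_seq a X i)) \<longlonglongrightarrow> - c"
    using X by (intro tendsto_minus) (simp add: sums_def)
  have "(\<lambda>i. \<bar>b i\<bar>) = (\<lambda>i. \<bar>a i\<bar>)" by (auto simp: b_def)
  then have "b \<longlonglongrightarrow> 0"
    using lim tendsto_rabs_zero_iff[of a] tendsto_rabs_zero_iff[of b] by simp
  moreover have "max (b i) 0 = - restrict_seq a X i + max (a i) 0" for i
    by (auto simp: b_def restrict_seq_def)
  then have "(\<lambda>n. \<Sum>i<n. max (b i) 0) = (\<lambda>n. - (\<Sum>i<n. restrict_seq a X i) + (\<Sum>i<n. max (a i) 0))"
    by (simp only: sum.distrib sum_negf)
  then have "filterlim (\<lambda>n. \<Sum>i<n. max (b i) 0) at_top sequentially"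
    using filterlim_tendsto_add_at_top[OF partial pos] by simp
  moreover have "min (b i) 0 = - restrict_seq a X i + min (a i) 0" for i
    by (auto simp: b_def restrict_seq_def)
  then have "(\<lambda>n. \<Sum>i<n. min (b i) 0) = (\<lambda>n. - (\<Sum>i<n. restrict_seq a X i) + (\<Sum>i<n. min (a i) 0))"
    by (simp only: sum.distrib sum_negf)
  then have "filterlim (\<lambda>n. \<Sum>i<n. min (b i) 0) at_bot sequentially"
    using filterlim_tendsto_add_at_bot_iff[OF partial] neg by simp
  ultimately obtain F where F: "finite F" "\<bar>sum b F - (t - c)\<bar> < \<delta>"
    using finite_subsum_approx \<open>0 < \<delta>\<close> by blast
  have "restrict_seq a (sym_diff X F) = (\<lambda>i. restrict_seq a X i + (if i \<in> F then b i else 0))"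
    by (auto simp: restrict_seq_def b_def)
  moreover have "(\<lambda>i. restrict_seq a X i + (if i \<in> F then b i else 0)) sums (c + sum b F)"
    by (rule sums_add[OF X sums_If_finite_set[OF F(1)]])
  ultimately show ?thesis
    using F by (intro exI[of _ F] exI[of _ "c + sum b F"]) auto
qed

definition finite_variants :: "nat set set \<Rightarrow> nat set set" where
  "finite_variants \<X> = {sym_diff X F | X F. X \<in> \<X> \<and> finite F}"

lemma finite_variants_inf_coinf: "\<X> \<subseteq> inf_coinf \<Longrightarrow> finite_variants \<X> \<subseteq> inf_coinf"
  by (auto simp: finite_variants_def intro: sym_diff_finite_inf_coinf)

lemma card_of_finite_variants:
  assumes "infinite \<X>"
  shows "|finite_variants \<X>| \<le>o |\<X>|"
proof -
  have "|{F :: nat set. finite F}| \<le>o |\<X>|"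
    using countable_card_of_nat[THEN iffD1, OF countable_Collect_finite]
      infinite_iff_card_of_nat[THEN iffD1, OF assms] by (rule ordLeq_transitive)
  then have "|\<X> \<times> {F :: nat set. finite F}| =o |\<X>|"
    by (intro card_of_Times_infinite[OF assms, THEN conjunct1]) auto
  moreover have "finite_variants \<X> = (\<lambda>(X, F). sym_diff X F) ` (\<X> \<times> {F. finite F})"
    by (auto simp: finite_variants_def)
  then have "|finite_variants \<X>| \<le>o |\<X> \<times> {F :: nat set. finite F}|"
    by (simp only: card_of_image)
  ultimately show ?thesis by (rule ordLeq_ordIso_trans[rotated])
qed

lemma exists_finite_variant_sums_near:
  assumes "ss_c_family \<X>" "a \<in> S_cc" "0 < \<delta>"
  shows "\<exists>Z\<in>finite_variants \<X>. \<exists>L. subser a Z sums L \<and> \<bar>L - t\<bar> < \<delta>"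
proof -
  obtain X where X: "X \<in> \<X>" "summable (subser a X)"
    using assms(1,2) by (auto simp: ss_c_family_def)
  then have "X \<in> inf_coinf" using assms(1) by (auto simp: ss_c_family_def)
  then obtain c where "restrict_seq a X sums c"
    using X(2) subser_summable_iff by (auto simp: inf_coinf_def summable_def)
  then obtain F L where FL: "finite F" "restrict_seq a (sym_diff X F) sums L" "\<bar>L - t\<bar> < \<delta>"
    using finite_variant_sums_near[OF assms(2) _ assms(3)] by blast
  have "sym_diff X F \<in> inf_coinf"
    by (rule sym_diff_finite_inf_coinf[OF \<open>X \<in> inf_coinf\<close> FL(1)])
  then have "subser a (sym_diff X F) sums L"
    using FL(2) subser_sums_iff by (auto simp: inf_coinf_def)
  moreover have "sym_diff X F \<in> finite_variants \<X>"
    using X(1) FL(1) by (auto simp: finite_variants_def)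
  ultimately show ?thesis using FL(3) by blast
qed

lemma ss_e_family_from_ss_c:
  assumes "ss_c_family \<X>" "0 < \<epsilon>"
  shows "\<exists>\<Y>. ss_e_family \<epsilon> \<Y> \<and> |\<Y>| \<le>o |\<X>|"
proof (intro exI conjI)
  let ?\<Y> = "uminus ` finite_variants \<X>"
  have sub: "finite_variants \<X> \<subseteq> inf_coinf"
    using assms(1) finite_variants_inf_coinf by (simp add: ss_c_family_def)
  show "ss_e_family \<epsilon> ?\<Y>"
    unfolding ss_e_family_def
  proof (intro conjI ballI)
    show "?\<Y> \<subseteq> inf_coinf" using sub Compl_inf_coinf by blast
  next
    fix a assume a: "a \<in> S_cc"
    then obtain Z L where Z: "Z \<in> finite_variants \<X>" "subser a Z sums L" "\<bar>L - 0\<bar> < \<epsilon>"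
      using exists_finite_variant_sums_near[OF assms(1) a assms(2)] by blast
    have "infinite Z" "infinite (- Z)"
      using Z(1) sub Compl_inf_coinf by (auto simp: inf_coinf_def)
    have "a sums suminf a" using a by (simp add: S_cc_def summable_sums)
    then have "(\<lambda>i. a i - restrict_seq a Z i) sums (suminf a - L)"
      using Z(2) subser_sums_iff[OF \<open>infinite Z\<close>] by (simp add: sums_diff)
    moreover have "(\<lambda>i. a i - restrict_seq a Z i) = restrict_seq a (- Z)"
      by (auto simp: restrict_seq_def)
    ultimately have "subser a (- Z) sums (suminf a - L)"
      using subser_sums_iff[OF \<open>infinite (- Z)\<close>] by simp
    then show "\<exists>X\<in>?\<Y>. \<exists>L. subser a X sums L \<and> L \<in> {suminf a - \<epsilon><..<suminf a + \<epsilon>}"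
      using Z(1,3) by (intro bexI[of _ "- Z"] exI[of _ "suminf a - L"]) auto
  qed
  show "|?\<Y>| \<le>o |\<X>|"
    using card_of_image card_of_finite_variants[OF ss_c_family_infinite[OF assms(1)]]
    by (rule ordLeq_transitive)
qed

lemma ss_l_family_from_ss_c:
  assumes "ss_c_family \<X>" "u < v" "{u<..<v} \<subseteq> A"
  shows "\<exists>\<Y>. ss_l_family A \<Y> \<and> |\<Y>| \<le>o |\<X>|"
proof (intro exI conjI)
  show "ss_l_family A (finite_variants \<X>)"
    unfolding ss_l_family_def
  proof (intro conjI ballI)
    show "finite_variants \<X> \<subseteq> inf_coinf"
      using assms(1) finite_variants_inf_coinf by (simp add: ss_c_family_def)
  next
    fix a assume "a \<in> S_cc"
    then obtain Z L where Z: "Z \<in> finite_variants \<X>" "subser a Z sums L"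
      and "\<bar>L - (u + v) / 2\<bar> < (v - u) / 2"
      using exists_finite_variant_sums_near[OF assms(1)] assms(2) by (metis diff_gt_0_iff_gt half_gt_zero)
    then have "u < L" "L < v" by (auto simp: abs_less_iff field_simps)
    then have "L \<in> A" using assms(3) by auto
    then show "\<exists>X\<in>finite_variants \<X>. \<exists>L\<in>A. subser a X sums L" using Z by blast
  qed
  show "|finite_variants \<X>| \<le>o |\<X>|"
    by (rule card_of_finite_variants[OF ss_c_family_infinite[OF assms(1)]])
qed

lemma ss_c_family_of_ss_e: "ss_e_family \<epsilon> \<X> \<Longrightarrow> ss_c_family \<X>"
  unfolding ss_e_family_def ss_c_family_def using sums_summable by fast

lemma ss_c_family_of_ss_l: "ss_l_family A \<X> \<Longrightarrow> ss_c_family \<X>"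
  unfolding ss_l_family_def ss_c_family_def using sums_summable by fast

section \<open>Least cardinalities\<close>

lemma mincard_attained:
  assumes "P \<F>\<^sub>0"
  shows "\<exists>\<F>. P \<F> \<and> mincard P = |\<F>| \<and> (\<forall>\<G>. P \<G> \<longrightarrow> card_of \<F> \<le>o card_of \<G>)"
proof -
  let ?minimal = "\<lambda>\<F>. P \<F> \<and> (\<forall>\<G>. P \<G> \<longrightarrow> card_of \<F> \<le>o card_of \<G>)"
  let ?cards = "{card_of \<F> | \<F>. P \<F>}"
  have "?cards \<noteq> {}" "\<forall>r\<in>?cards. Well_order r"
    using assms by (auto simp: card_of_Well_order)
  then obtain r where "r \<in> ?cards" "\<forall>r'\<in>?cards. r \<le>o r'"
    using exists_minim_Well_order by meson
  then have "\<exists>\<F>. ?minimal \<F>" by blast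
  then have "?minimal (SOME \<F>. ?minimal \<F>)" by (rule someI_ex)
  then show ?thesis unfolding mincard_def by blast
qed

lemma mincard_le:
  assumes "P \<G>"
  shows "mincard P \<le>o |\<G>|"
proof -
  obtain \<F> where "mincard P = |\<F>|" "\<forall>\<G>. P \<G> \<longrightarrow> card_of \<F> \<le>o card_of \<G>"
    using mincard_attained[of P, OF assms] by blast
  then show ?thesis using assms by simp
qed

lemma mincard_ordLeq_mincard:
  assumes "P \<F>\<^sub>0" and "\<And>\<F>. P \<F> \<Longrightarrow> \<exists>\<G>. Q \<G> \<and> |\<G>| \<le>o |\<F>|"
  shows "mincard Q \<le>o mincard P"
proof -
  obtain \<F> where "P \<F>" "mincard P = |\<F>|"
    using mincard_attained[of P, OF assms(1)] by blast
  moreover obtain \<G> where "Q \<G>" "|\<G>| \<le>o |\<F>|"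
    using assms(2)[OF \<open>P \<F>\<close>] by blast
  ultimately show ?thesis
    using mincard_le[of Q \<G>] ordLeq_transitive by metis
qed

lemma mincard_ordLeq_mincard_of_imp:
  assumes "P \<F>\<^sub>0" and "\<And>\<F>. P \<F> \<Longrightarrow> Q \<F>"
  shows "mincard Q \<le>o mincard P"
  using assms by (intro mincard_ordLeq_mincard) (auto intro: ordLeq_refl card_of_Card_order)

theorem mainTheorem12:
  fixes \<epsilon> :: real and A :: "real set"
  assumes "\<epsilon> > 0"
    and "\<exists>u v. u < v \<and> {u<..<v} \<subseteq> A"
  shows "(mincard (ss_e_family \<epsilon>), mincard ss_c_family) \<in> ordIso
       \<and> (mincard (ss_l_family A), mincard ss_c_family) \<in> ordIso"
proof -
  obtain u v where uv: "u < v" "{u<..<v} \<subseteq> A" using assms(2) by blast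
  obtain \<X>\<^sub>e where "ss_e_family \<epsilon> \<X>\<^sub>e"
    using ss_e_family_from_ss_c[OF ss_c_family_inf_coinf assms(1)] by blast
  obtain \<X>\<^sub>l where "ss_l_family A \<X>\<^sub>l"
    using ss_l_family_from_ss_c[OF ss_c_family_inf_coinf uv] by blast
  have "mincard (ss_e_family \<epsilon>) \<le>o mincard ss_c_family"
    using ss_c_family_inf_coinf ss_e_family_from_ss_c[OF _ assms(1)] by (rule mincard_ordLeq_mincard)
  moreover have "mincard ss_c_family \<le>o mincard (ss_e_family \<epsilon>)"
    using \<open>ss_e_family \<epsilon> \<X>\<^sub>e\<close> ss_c_family_of_ss_e by (rule mincard_ordLeq_mincard_of_imp)
  moreover have "mincard (ss_l_family A) \<le>o mincard ss_c_family"
    using ss_c_family_inf_coinf ss_l_family_from_ss_c[OF _ uv] by (rule mincard_ordLeq_mincard)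
  moreover have "mincard ss_c_family \<le>o mincard (ss_l_family A)"
    using \<open>ss_l_family A \<X>\<^sub>l\<close> ss_c_family_of_ss_l by (rule mincard_ordLeq_mincard_of_imp)
  ultimately show ?thesis by (simp add: ordIso_iff_ordLeq)
qed

end
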